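(* Let $G\subset GL(V)$ be a reflection group and let $g\in G$ with $\ell(g)=\operatorname{codim}(g)$. If $h\in G$ satisfies $h\le_\ell g$, then $h\le_\perp g$.
   Context: $V$ is a finite-dimensional vector space of dimension $n$ over $\mathbb{R}$ or $\mathbb{C}$. A reflection is an element of $GL(V)$ of finite order fixing a hyperplane pointwise; a reflection group is a finite subgroup of $GL(V)$ generated by reflections. $\ell(g)$ is the minimal number of reflections of $G$ whose product is $g$ ($\ell(1)=0$). $\operatorname{codim}(g)=n-\dim\{v\in V:gv=v\}$. The reflection length order: $a\le_\ell c$ iff $\ell(a)+\ell(a^{-1}c)=\ell(c)$. The codimension order: $a\le_\perp c$ iff $\operatorname{codim}(a)+\operatorname{codim}(a^{-1}c)=\operatorname{codim}(c)$. *)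

theory Defs
  imports "HOL-Analysis.Analysis"
begin

text \<open>V = 'k^'n (n = CARD('n)), GL(V) = invertible n x n matrices over the field 'k,
  group product = matrix product (**), identity = mat 1.\<close>

definition mat_prod :: "('k::field^'n^'n) list \<Rightarrow> 'k^'n^'n" where
  "mat_prod rs = foldr (**) rs (mat 1)"

definition mat_pow :: "'k::field^'n^'n \<Rightarrow> nat \<Rightarrow> 'k^'n^'n" where
  "mat_pow A k = (((**) A) ^^ k) (mat 1)"

definition fixed_space :: "'k::field^'n^'n \<Rightarrow> ('k^'n) set" where
  "fixed_space A = {v. A *v v = v}"

definition is_reflection :: "'k::field^'n^'n \<Rightarrow> bool" where
  "is_reflection A \<longleftrightarrow> invertible A \<and> A \<noteq> mat 1 \<and> (\<exists>k>0. mat_pow A k = mat 1) \<and>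
     (\<exists>H. vec.subspace H \<and> vec.dim H = CARD('n) - 1 \<and> (\<forall>v\<in>H. A *v v = v))"

inductive_set gen_subgroup :: "('k::field^'n^'n) set \<Rightarrow> ('k^'n^'n) set" for S where
  gen_one: "mat 1 \<in> gen_subgroup S"
| gen_base: "s \<in> S \<Longrightarrow> s \<in> gen_subgroup S"
| gen_mult: "a \<in> gen_subgroup S \<Longrightarrow> b \<in> gen_subgroup S \<Longrightarrow> a ** b \<in> gen_subgroup S"
| gen_inv: "a \<in> gen_subgroup S \<Longrightarrow> matrix_inv a \<in> gen_subgroup S"

definition reflections_of :: "('k::field^'n^'n) set \<Rightarrow> ('k^'n^'n) set" where
  "reflections_of G = {r \<in> G. is_reflection r}"

definition is_reflection_group :: "('k::field^'n^'n) set \<Rightarrow> bool" where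
  "is_reflection_group G \<longleftrightarrow> finite G \<and> (\<forall>A\<in>G. invertible A) \<and> mat 1 \<in> G \<and>
     (\<forall>A\<in>G. \<forall>B\<in>G. A ** B \<in> G) \<and> (\<forall>A\<in>G. matrix_inv A \<in> G) \<and>
     G = gen_subgroup (reflections_of G)"

definition refl_length :: "('k::field^'n^'n) set \<Rightarrow> 'k^'n^'n \<Rightarrow> nat" where
  "refl_length G g = (LEAST k. \<exists>rs. length rs = k \<and> set rs \<subseteq> reflections_of G \<and> mat_prod rs = g)"

definition codim :: "'k::field^'n^'n \<Rightarrow> nat" where
  "codim A = CARD('n) - vec.dim (fixed_space A)"

definition le_ell :: "('k::field^'n^'n) set \<Rightarrow> 'k^'n^'n \<Rightarrow> 'k^'n^'n \<Rightarrow> bool" where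
  "le_ell G a c \<longleftrightarrow> refl_length G a + refl_length G (matrix_inv a ** c) = refl_length G c"

definition le_perp :: "'k::field^'n^'n \<Rightarrow> 'k^'n^'n \<Rightarrow> bool" where
  "le_perp a c \<longleftrightarrow> codim a + codim (matrix_inv a ** c) = codim c"

end

theory Submission
  imports Defs
begin

text \<open>Fixed spaces intersect well under products: the fixed space of \<open>A ** B\<close> contains
  \<open>Fix A \<inter> Fix B\<close>, so by Grassmann's formula codimension is subadditive. A reflection has
  codimension at most one, hence every product of \<open>k\<close> reflections has codimension at most
  \<open>k\<close>, i.e. \<open>codim \<le> \<ell>\<close> on \<open>G\<close>. If \<open>h \<le>\<^sub>\<ell> g\<close> and \<open>\<ell>(g) = codim g\<close>, then
  \<open>codim g \<le> codim h + codim (h\<inverse>g) \<le> \<ell>(h) + \<ell>(h\<inverse>g) = \<ell>(g) = codim g\<close>,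
  so equality holds throughout.\<close>

lemma matrix_inv_cancel:
  fixes A :: "'k::field^'n^'n"
  assumes "invertible A"
  shows "A ** matrix_inv A = mat 1 \<and> matrix_inv A ** A = mat 1"
  using assms unfolding invertible_def matrix_inv_def by (rule someI_ex)

lemma subspace_fixed_space: "vec.subspace (fixed_space (A::'k::field^'n^'n))"
  unfolding vec.subspace_def fixed_space_def
  by (simp add: matrix_vector_right_distrib vec.scale)

lemma codim_mat_1: "codim (mat 1 :: 'k::field^'n^'n) = 0"
proof -
  have "fixed_space (mat 1 :: 'k::field^'n^'n) = UNIV" by (simp add: fixed_space_def)
  then show ?thesis unfolding codim_def using vec_dim_card[where 'a='k and 'n='n] by simp
qed

lemma codim_mult_le:
  fixes A B :: "'k::field^'n^'n"
  shows "codim (A ** B) \<le> codim A + codim B"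
proof -
  let ?S = "fixed_space A" and ?T = "fixed_space B"
  have "?S \<inter> ?T \<subseteq> fixed_space (A ** B)"
    by (auto simp: fixed_space_def matrix_vector_mul_assoc[symmetric])
  then have "vec.dim (?S \<inter> ?T) \<le> vec.dim (fixed_space (A ** B))"
    by (rule vec.dim_subset)
  moreover have "vec.dim {x + y |x y. x \<in> ?S \<and> y \<in> ?T} + vec.dim (?S \<inter> ?T)
      = vec.dim ?S + vec.dim ?T"
    by (rule vec.dim_sums_Int[OF subspace_fixed_space subspace_fixed_space])
  moreover have "vec.dim {x + y |x y. x \<in> ?S \<and> y \<in> ?T} \<le> CARD('n)"
    and "vec.dim ?S \<le> CARD('n)" and "vec.dim ?T \<le> CARD('n)"
    and "vec.dim (fixed_space (A ** B)) \<le> CARD('n)"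
    by (rule dim_subset_UNIV_cart_gen)+
  ultimately show ?thesis unfolding codim_def by linarith
qed

lemma codim_reflection_le_1:
  fixes r :: "'k::field^'n^'n"
  assumes "is_reflection r"
  shows "codim r \<le> 1"
proof -
  obtain H where H: "vec.dim H = CARD('n) - 1" "\<forall>v\<in>H. r *v v = v"
    using assms unfolding is_reflection_def by blast
  then have "H \<subseteq> fixed_space r" by (auto simp: fixed_space_def)
  then have "vec.dim H \<le> vec.dim (fixed_space r)" by (rule vec.dim_subset)
  with H(1) show ?thesis unfolding codim_def by linarith
qed

lemma codim_mat_prod_le_length:
  fixes rs :: "('k::field^'n^'n) list"
  assumes "\<forall>r\<in>set rs. is_reflection r"
  shows "codim (mat_prod rs) \<le> length rs"
  using assms
proof (induction rs)
  case Nil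
  then show ?case by (simp add: mat_prod_def codim_mat_1)
next
  case (Cons r rs)
  have "codim (mat_prod (r # rs)) \<le> codim r + codim (mat_prod rs)"
    unfolding mat_prod_def by (simp add: codim_mult_le)
  with Cons codim_reflection_le_1[of r] show ?case by simp
qed

lemma mat_prod_append: "mat_prod (xs @ ys) = mat_prod xs ** (mat_prod ys :: 'k::field^'n^'n)"
  by (induction xs) (simp_all add: mat_prod_def matrix_mul_assoc)

lemma mat_prod_concat_replicate:
  "mat_prod (concat (replicate m rs)) = mat_pow (mat_prod rs :: 'k::field^'n^'n) m"
  by (induction m) (simp_all add: mat_pow_def mat_prod_append, simp add: mat_prod_def)

lemma mat_pow_add: "mat_pow (x :: 'k::field^'n^'n) (a + b) = mat_pow x a ** mat_pow x b"
  by (induction a) (simp_all add: mat_pow_def matrix_mul_assoc)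

lemma mat_pow_Suc: "mat_pow (x :: 'k::field^'n^'n) (Suc k) = x ** mat_pow x k"
  by (simp add: mat_pow_def)

lemma mat_pow_closed:
  assumes "mat 1 \<in> S" and "\<forall>A\<in>S. \<forall>B\<in>S. A ** B \<in> S" and "x \<in> S"
  shows "mat_pow x k \<in> S"
  using assms by (induction k) (auto simp: mat_pow_def)

lemma invertible_mat_pow:
  fixes x :: "'k::field^'n^'n"
  assumes "invertible x"
  shows "invertible (mat_pow x k)"
proof (induction k)
  case 0
  show ?case by (auto simp: mat_pow_def invertible_def)
next
  case (Suc k)
  then show ?case using assms by (simp add: mat_pow_Suc invertible_mult)
qed

text \<open>In a finite monoid of matrices the powers of \<open>x\<close> repeat, so \<open>x\<close> has finite order
  and its inverse is one of its powers.\<close>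

lemma matrix_inv_eq_mat_pow:
  fixes x :: "'k::field^'n^'n"
  assumes fin: "finite S" and one: "mat 1 \<in> S" and mult: "\<forall>A\<in>S. \<forall>B\<in>S. A ** B \<in> S"
    and x: "x \<in> S" and inv: "invertible x"
  shows "\<exists>m. matrix_inv x = mat_pow x m"
proof -
  have "range (mat_pow x) \<subseteq> S" using mat_pow_closed[OF one mult x] by auto
  then have "\<not> inj (mat_pow x)"
    using fin finite_subset finite_imageD infinite_UNIV_nat by blast
  then obtain i d where d: "d > 0" and repeat: "mat_pow x i = mat_pow x (i + d)"
    unfolding inj_def by (metis less_imp_add_positive linorder_neqE_nat)
  obtain P where P: "P ** mat_pow x i = mat 1"
    using invertible_mat_pow[OF inv, of i] by (auto simp: invertible_def)
  have "P ** (mat_pow x i ** mat 1) = P ** (mat_pow x i ** mat_pow x d)"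
    using repeat mat_pow_add[of x i d] by simp
  then have order: "mat_pow x d = mat 1" by (simp add: matrix_mul_assoc P)
  obtain e where "d = Suc e" using d by (cases d) auto
  with order have "x ** mat_pow x e = mat 1" by (simp add: mat_pow_Suc)
  then have "matrix_inv x ** (x ** mat_pow x e) = matrix_inv x" by simp
  then have "matrix_inv x = mat_pow x e"
    using matrix_inv_cancel[OF inv] by (simp add: matrix_mul_assoc)
  then show ?thesis ..
qed

lemma reflection_word_exists:
  fixes G :: "('k::field^'n^'n) set"
  assumes G: "is_reflection_group G" and x: "x \<in> G"
  shows "\<exists>rs. set rs \<subseteq> reflections_of G \<and> mat_prod rs = x"
proof -
  have "x \<in> gen_subgroup (reflections_of G)" using G x by (simp add: is_reflection_group_def)
  then show ?thesis
  proof (induction rule: gen_subgroup.induct)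
    case gen_one
    show ?case by (intro exI[of _ "[]"]) (simp add: mat_prod_def)
  next
    case (gen_base s)
    then show ?case by (intro exI[of _ "[s]"]) (simp add: mat_prod_def)
  next
    case (gen_mult a b)
    then obtain ra rb where "set ra \<subseteq> reflections_of G" "mat_prod ra = a"
      "set rb \<subseteq> reflections_of G" "mat_prod rb = b" by blast
    then show ?case by (intro exI[of _ "ra @ rb"]) (simp add: mat_prod_append)
  next
    case (gen_inv a)
    then obtain ra where ra: "set ra \<subseteq> reflections_of G" "mat_prod ra = a" by blast
    have "a \<in> G" using gen_inv(1) G by (simp add: is_reflection_group_def)
    then obtain m where "matrix_inv a = mat_pow a m"
      using G matrix_inv_eq_mat_pow[of G a] by (auto simp: is_reflection_group_def)
    with ra show ?case
      by (intro exI[of _ "concat (replicate m ra)"]) (auto simp: mat_prod_concat_replicate)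
  qed
qed

lemma codim_le_refl_length:
  fixes G :: "('k::field^'n^'n) set"
  assumes G: "is_reflection_group G" and x: "x \<in> G"
  shows "codim x \<le> refl_length G x"
proof -
  let ?P = "\<lambda>k. \<exists>rs. length rs = k \<and> set rs \<subseteq> reflections_of G \<and> mat_prod rs = x"
  obtain rs where "set rs \<subseteq> reflections_of G \<and> mat_prod rs = x"
    using reflection_word_exists[OF G x] by blast
  then have "?P (Least ?P)" by (intro LeastI[of ?P "length rs"]) blast
  then obtain ws where ws: "length ws = refl_length G x" "set ws \<subseteq> reflections_of G"
      "mat_prod ws = x"
    unfolding refl_length_def by blast
  then have "\<forall>r\<in>set ws. is_reflection r" by (auto simp: reflections_of_def)
  from codim_mat_prod_le_length[OF this] ws show ?thesis by simp
qed

lemma le_ell_imp_le_perp: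
  fixes G :: "('k::field^'n^'n) set"
  assumes G: "is_reflection_group G" and g: "g \<in> G" and tight: "refl_length G g = codim g"
    and h: "h \<in> G" and le: "le_ell G h g"
  shows "le_perp h g"
proof -
  have "invertible h" and quot: "matrix_inv h ** g \<in> G"
    using G h g by (auto simp: is_reflection_group_def)
  then have "g = h ** (matrix_inv h ** g)"
    using matrix_inv_cancel by (metis matrix_mul_assoc matrix_mul_lid)
  then have "codim g \<le> codim h + codim (matrix_inv h ** g)"
    using codim_mult_le[of h "matrix_inv h ** g"] by simp
  moreover have "codim h \<le> refl_length G h" by (rule codim_le_refl_length[OF G h])
  moreover have "codim (matrix_inv h ** g) \<le> refl_length G (matrix_inv h ** g)"
    by (rule codim_le_refl_length[OF G quot])
  ultimately show ?thesis using le tight unfolding le_ell_def le_perp_def by linarith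
qed

theorem mainTheorem3:
  shows "(\<forall>(G :: (real^'n^'n) set) g h.
            is_reflection_group G \<and> g \<in> G \<and> refl_length G g = codim g \<and>
            h \<in> G \<and> le_ell G h g \<longrightarrow> le_perp h g) \<and>
         (\<forall>(G :: (complex^'n^'n) set) g h.
            is_reflection_group G \<and> g \<in> G \<and> refl_length G g = codim g \<and>
            h \<in> G \<and> le_ell G h g \<longrightarrow> le_perp h g)"
  by (blast intro: le_ell_imp_le_perp)

end
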